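(* Let $A$ be a real symmetric $n\times n$ matrix with $A\mathbf{1}_n=\rho_A\mathbf{1}_n$ for some $\rho_A>0$, and let $B$ be a real symmetric $m\times m$ matrix with $B\mathbf{1}_m=\rho_B\mathbf{1}_m$ for some $\rho_B>0$. Then (a) $n_-(A\diamond B)=n_-(A)+n_-(B)$, (b) $n_+(A\diamond B)=n_+(A)+n_+(B)-1$, and (c) $n_0(A\diamond B)=nm-n-m+1+n_0(A)+n_0(B)$.
   Context: $\mathbf{1}_k$ is the all-ones column vector of length $k$ and $J_k$ the $k\times k$ all-ones matrix. For an $n\times n$ matrix $A=(a_{ij})$ and an $m\times m$ matrix $B$, $A\diamond B=A\otimes J_m+J_n\otimes B$ is the $nm\times nm$ block matrix whose $(i,j)$ block is $a_{ij}J_m+B$. For a real symmetric matrix $M$, $n_+(M)$, $n_-(M)$, $n_0(M)$ denote the numbers of positive, negative, and zero eigenvalues of $M$, counted with multiplicity. *)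

theory Defs
  imports "Jordan_Normal_Form.Char_Poly"
begin

definition n_pos :: "real mat \<Rightarrow> nat" where
  "n_pos M = (\<Sum>x\<in>{x. x > 0 \<and> poly (char_poly M) x = 0}. order x (char_poly M))"

definition n_neg :: "real mat \<Rightarrow> nat" where
  "n_neg M = (\<Sum>x\<in>{x. x < 0 \<and> poly (char_poly M) x = 0}. order x (char_poly M))"

definition n_zero :: "real mat \<Rightarrow> nat" where
  "n_zero M = order 0 (char_poly M)"

definition ones_vec :: "nat \<Rightarrow> real vec" where
  "ones_vec k = vec k (\<lambda>_. 1)"

text \<open>A \<diamond> B = A \<otimes> J_m + J_n \<otimes> B for A n\<times>n and B m\<times>m: entry at row i*m+p,
  column j*m+q is a_ij + b_pq.\<close>
definition diamond :: "real mat \<Rightarrow> real mat \<Rightarrow> real mat" where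
  "diamond A B = (let n = dim_row A; m = dim_row B in
     mat (n * m) (n * m) (\<lambda>(r, c). A $$ (r div m, c div m) + B $$ (r mod m, c mod m)))"

end

theory Submission
  imports Defs "Jordan_Normal_Form.Jordan_Normal_Form_Existence"
begin

text \<open>Let \<open>S\<^sub>k\<close> be the \<open>k \<times> k\<close> matrix with columns \<open>\<one>\<^sub>k\<close> and \<open>e\<^sub>j - e\<^sub>0\<close> (\<open>0 < j < k\<close>).
  If \<open>\<one>\<^sub>n\<close> is a right and left eigenvector of \<open>A\<close> for \<open>\<rho>\<^sub>A\<close>, then \<open>S\<^sub>n\<^sup>-\<^sup>1 A S\<^sub>n = [\<rho>\<^sub>A] \<oplus> A'\<close>,
  and \<open>S\<^sub>n\<^sup>-\<^sup>1 J\<^sub>n S\<^sub>n = [n] \<oplus> 0\<close>. Conjugating \<open>A \<diamond> B = A \<otimes> J\<^sub>m + J\<^sub>n \<otimes> B\<close> by \<open>S\<^sub>n \<otimes> S\<^sub>m\<close>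
  and reordering the basis therefore yields the block diagonal matrix
  \<open>[m \<rho>\<^sub>A + n \<rho>\<^sub>B] \<oplus> m A' \<oplus> n B' \<oplus> 0\<close> with a zero block of size \<open>(n - 1)(m - 1)\<close>, whereas
  \<open>A\<close> and \<open>B\<close> themselves are similar to \<open>[\<rho>\<^sub>A] \<oplus> A'\<close> and \<open>[\<rho>\<^sub>B] \<oplus> B'\<close>. Positive scalings
  preserve signs of eigenvalues and \<open>\<rho>\<^sub>A, \<rho>\<^sub>B, m \<rho>\<^sub>A + n \<rho>\<^sub>B > 0\<close>, so comparing the
  characteristic polynomials gives the three inertia formulas.\<close>

section \<open>Counting real roots by sign\<close>

definition root_count :: "(real \<Rightarrow> bool) \<Rightarrow> real poly \<Rightarrow> nat" where
  "root_count P p = (\<Sum>x\<in>{x. P x \<and> poly p x = 0}. order x p)"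

lemma n_pos_eq_root_count: "n_pos M = root_count (\<lambda>x. x > 0) (char_poly M)"
  unfolding n_pos_def root_count_def ..

lemma n_neg_eq_root_count: "n_neg M = root_count (\<lambda>x. x < 0) (char_poly M)"
  unfolding n_neg_def root_count_def ..

lemma n_zero_eq_root_count: "n_zero M = root_count (\<lambda>x. x = 0) (char_poly M)"
proof -
  have "{x. x = 0 \<and> poly (char_poly M) x = 0} = (if poly (char_poly M) 0 = 0 then {0} else {})"
    by auto
  then show ?thesis
    unfolding n_zero_def root_count_def by (auto simp: order_root)
qed

lemma root_count_mono_neutral:
  assumes p: "p \<noteq> 0" and S: "finite S" "{x. P x \<and> poly p x = 0} \<subseteq> S" "\<And>x. x \<in> S \<Longrightarrow> P x"
  shows "root_count P p = (\<Sum>x\<in>S. order x p)"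
  unfolding root_count_def
  by (rule sum.mono_neutral_left[OF S(1,2)]) (use S(3) p in \<open>auto simp: order_root\<close>)

lemma root_count_mult:
  assumes p: "p \<noteq> 0" and q: "q \<noteq> 0"
  shows "root_count P (p * q) = root_count P p + root_count P q"
proof -
  let ?S = "{x. P x \<and> poly (p * q) x = 0}"
  have fin: "finite ?S"
    using poly_roots_finite[of "p * q"] p q by (auto intro: finite_subset)
  have "root_count P (p * q) = (\<Sum>x\<in>?S. order x p) + (\<Sum>x\<in>?S. order x q)"
    unfolding root_count_def sum.distrib[symmetric] using p q by (auto simp: order_mult)
  also have "\<dots> = root_count P p + root_count P q"
    by (subst (1 2) root_count_mono_neutral[OF _ fin]) (use p q in auto)
  finally show ?thesis .
qed

lemma root_count_linear: "root_count P [:-a, 1:] = (if P a then 1 else 0)"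
proof -
  have "{x. P x \<and> poly [:-a, 1:] x = 0} = (if P a then {a} else {})"
    by auto
  then show ?thesis
    unfolding root_count_def by auto
qed

lemma root_count_monom_power: "root_count P ([:0, 1:] ^ k) = (if P 0 then k else 0)"
proof -
  have "{x. P x \<and> poly ([:0, 1:] ^ k) x = 0} = (if P 0 \<and> k > 0 then {0} else {})"
    by (auto simp: poly_power)
  then show ?thesis
    unfolding root_count_def by (auto simp: order_linear_power)
qed

text \<open>The library proves the scaling law for the order of a root of a characteristic polynomial
  only over \<open>\<complex>\<close> (via Jordan normal forms); it is transferred along \<open>\<real> \<hookrightarrow> \<complex>\<close>.\<close>

interpretation of_real_poly: map_poly_inj_idom_divide_hom "of_real :: real \<Rightarrow> complex" ..

lemma order_char_poly_smult_real:
  fixes M :: "real mat"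
  assumes M: "M \<in> carrier_mat n n" and c: "c \<noteq> 0"
  shows "order x (char_poly (c \<cdot>\<^sub>m M)) = order (x / c) (char_poly M)"
proof -
  let ?h = "of_real :: real \<Rightarrow> complex"
  have cM: "c \<cdot>\<^sub>m M \<in> carrier_mat n n"
    using M by simp
  have map_smult: "map_mat ?h (c \<cdot>\<^sub>m M) = ?h c \<cdot>\<^sub>m map_mat ?h M"
    by (rule eq_matI) (use M in auto)
  have "order x (char_poly (c \<cdot>\<^sub>m M)) = order (?h x) (char_poly (?h c \<cdot>\<^sub>m map_mat ?h M))"
    unfolding map_smult[symmetric] of_real_hom.char_poly_hom[OF cM] of_real_poly.order_hom ..
  also have "\<dots> = order (?h x / ?h c) (char_poly (map_mat ?h M))"
    by (rule order_char_poly_smult) (use M c in auto)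
  also have "\<dots> = order (x / c) (char_poly M)"
    unfolding of_real_hom.char_poly_hom[OF M] of_real_divide[symmetric] of_real_poly.order_hom ..
  finally show ?thesis .
qed

lemma char_poly_nonzero: "(M :: real mat) \<in> carrier_mat n n \<Longrightarrow> char_poly M \<noteq> 0"
  using degree_monic_char_poly by (metis one_neq_zero leading_coeff_0_iff)

lemma root_count_char_poly_smult:
  fixes M :: "real mat"
  assumes M: "M \<in> carrier_mat n n" and c: "c > 0" and P: "\<And>x. P (c * x) = P x"
  shows "root_count P (char_poly (c \<cdot>\<^sub>m M)) = root_count P (char_poly M)"
proof -
  let ?q = "char_poly (c \<cdot>\<^sub>m M)" and ?p = "char_poly M"
  have ord: "order (c * y) ?q = order y ?p" for y
    using order_char_poly_smult_real[OF M, of c "c * y"] c by simp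
  have "?q \<noteq> 0" "?p \<noteq> 0"
    using M char_poly_nonzero[of "c \<cdot>\<^sub>m M" n] char_poly_nonzero[of M n] by auto
  then have root: "poly ?q (c * y) = 0 \<longleftrightarrow> poly ?p y = 0" for y
    using ord[of y] by (simp add: order_root)
  have "{x. P x \<and> poly ?q x = 0} = (\<lambda>y. c * y) ` {y. P y \<and> poly ?p y = 0}"
  proof (intro equalityI subsetI)
    fix x assume x: "x \<in> {x. P x \<and> poly ?q x = 0}"
    have "x = c * (x / c)"
      using c by simp
    moreover have "x / c \<in> {y. P y \<and> poly ?p y = 0}"
      using x P[of "x / c"] root[of "x / c"] \<open>x = c * (x / c)\<close> by auto
    ultimately show "x \<in> (\<lambda>y. c * y) ` {y. P y \<and> poly ?p y = 0}"
      by (rule image_eqI)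
  next
    fix x assume "x \<in> (\<lambda>y. c * y) ` {y. P y \<and> poly ?p y = 0}"
    then obtain y where "x = c * y" "P y" "poly ?p y = 0"
      by blast
    then show "x \<in> {x. P x \<and> poly ?q x = 0}"
      using P[of y] root[of y] by simp
  qed
  moreover have "inj_on (\<lambda>y. c * y) A" for A
    using c by (simp add: inj_on_def)
  ultimately have "root_count P ?q = (\<Sum>y\<in>{y. P y \<and> poly ?p y = 0}. order (c * y) ?q)"
    unfolding root_count_def by (simp add: sum.reindex)
  then show ?thesis
    unfolding ord root_count_def .
qed

section \<open>Kronecker products of matrices\<close>

lemma sum_lessThan_mult_nat:
  fixes n m :: nat
  shows "(\<Sum>k<n * m. f k) = (\<Sum>i<n. \<Sum>p<m. f (i * m + p))"
proof -
  have "sum f {i * m..<i * m + m} = (\<Sum>p<m. f (i * m + p))" for i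
    using sum.atLeastLessThan_shift_bounds[of f 0 "i * m" m]
    by (simp add: atLeast0LessThan add.commute comp_def)
  then show ?thesis
    by (simp add: sum.nat_group[symmetric])
qed

lemma mult_add_less_mult_nat:
  assumes "i < n" "p < m"
  shows "i * m + p < n * (m :: nat)"
proof -
  have "i * m + p < Suc i * m"
    using assms(2) by simp
  also have "\<dots> \<le> n * m"
    using assms(1) by (intro mult_le_mono1) simp
  finally show ?thesis .
qed

lemma index_mult_mat_sum:
  assumes "A \<in> carrier_mat nr n" "B \<in> carrier_mat n nc" "i < nr" "j < nc"
  shows "(A * B) $$ (i, j) = (\<Sum>k<n. A $$ (i, k) * B $$ (k, j))"
  using assms by (auto simp: scalar_prod_def lessThan_atLeast0 intro!: sum.cong)

definition kron_mat :: "'a :: semiring_1 mat \<Rightarrow> 'a mat \<Rightarrow> 'a mat" where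
  "kron_mat X Y = mat (dim_row X * dim_row Y) (dim_col X * dim_col Y)
    (\<lambda>(r, c). X $$ (r div dim_row Y, c div dim_col Y) * Y $$ (r mod dim_row Y, c mod dim_col Y))"

lemma kron_mat_carrier:
  "X \<in> carrier_mat n n \<Longrightarrow> Y \<in> carrier_mat m m \<Longrightarrow> kron_mat X Y \<in> carrier_mat (n * m) (n * m)"
  unfolding kron_mat_def by auto

lemma div_less_of_less_mult: "r < n * m \<Longrightarrow> r div m < (n :: nat)"
  by (simp add: less_mult_imp_div_less)

lemma mod_less_of_less_mult: "r < n * m \<Longrightarrow> r mod m < (m :: nat)"
  by (cases "m = 0") auto

lemma index_kron_mat:
  assumes "X \<in> carrier_mat n n" "Y \<in> carrier_mat m m" "r < n * m" "c < n * m"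
  shows "kron_mat X Y $$ (r, c) = X $$ (r div m, c div m) * Y $$ (r mod m, c mod m)"
  using assms unfolding kron_mat_def by auto

lemma index_kron_mat_pair:
  assumes "X \<in> carrier_mat n n" "Y \<in> carrier_mat m m" "i < n" "p < m" "j < n" "q < m"
  shows "kron_mat X Y $$ (i * m + p, j * m + q) = X $$ (i, j) * Y $$ (p, q)"
proof -
  have "i * m + p < n * m" "j * m + q < n * m"
    using assms by (simp_all add: mult_add_less_mult_nat)
  then show ?thesis
    using assms by (simp add: index_kron_mat)
qed

lemma kron_mat_mult:
  fixes X :: "'a :: comm_semiring_1 mat"
  assumes X: "X \<in> carrier_mat n n" and Z: "Z \<in> carrier_mat n n"
    and Y: "Y \<in> carrier_mat m m" and W: "W \<in> carrier_mat m m"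
  shows "kron_mat X Y * kron_mat Z W = kron_mat (X * Z) (Y * W)"
proof (rule eq_matI)
  fix r c assume "r < dim_row (kron_mat (X * Z) (Y * W))" "c < dim_col (kron_mat (X * Z) (Y * W))"
  then have r: "r < n * m" and c: "c < n * m"
    using X Y Z W by (auto simp: kron_mat_def)
  have "(kron_mat X Y * kron_mat Z W) $$ (r, c)
      = (\<Sum>k<n * m. kron_mat X Y $$ (r, k) * kron_mat Z W $$ (k, c))"
    by (rule index_mult_mat_sum[OF kron_mat_carrier[OF X Y] kron_mat_carrier[OF Z W] r c])
  also have "\<dots> = (\<Sum>j<n. \<Sum>q<m. X $$ (r div m, j) * Z $$ (j, c div m)
      * (Y $$ (r mod m, q) * W $$ (q, c mod m)))"
  proof -
    have "kron_mat X Y $$ (r, j * m + q) * kron_mat Z W $$ (j * m + q, c)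
        = X $$ (r div m, j) * Z $$ (j, c div m) * (Y $$ (r mod m, q) * W $$ (q, c mod m))"
      if "j < n" "q < m" for j q
      using that X Y Z W r c by (simp add: index_kron_mat mult_add_less_mult_nat, simp add: mult_ac)
    then show ?thesis
      unfolding sum_lessThan_mult_nat by simp
  qed
  also have "\<dots> = (\<Sum>j<n. X $$ (r div m, j) * Z $$ (j, c div m))
      * (\<Sum>q<m. Y $$ (r mod m, q) * W $$ (q, c mod m))"
    by (rule sum_product[symmetric])
  also have "\<dots> = (X * Z) $$ (r div m, c div m) * (Y * W) $$ (r mod m, c mod m)"
    using r c by (simp add: index_mult_mat_sum[OF X Z] index_mult_mat_sum[OF Y W]
        div_less_of_less_mult mod_less_of_less_mult)
  also have "\<dots> = kron_mat (X * Z) (Y * W) $$ (r, c)"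
    by (rule index_kron_mat[symmetric]) (use X Y Z W r c in auto)
  finally show "(kron_mat X Y * kron_mat Z W) $$ (r, c) = kron_mat (X * Z) (Y * W) $$ (r, c)" .
qed (use X Y Z W in \<open>auto simp: kron_mat_def\<close>)

lemma kron_mat_one: "kron_mat (1\<^sub>m n) (1\<^sub>m m) = 1\<^sub>m (n * m)"
proof (rule eq_matI)
  fix r c assume "r < dim_row (1\<^sub>m (n * m))" "c < dim_col (1\<^sub>m (n * m))"
  then have r: "r < n * m" and c: "c < n * m"
    by auto
  have "r = c \<longleftrightarrow> r div m = c div m \<and> r mod m = c mod m"
    by (metis div_mult_mod_eq)
  then show "kron_mat (1\<^sub>m n) (1\<^sub>m m) $$ (r, c) = 1\<^sub>m (n * m) $$ (r, c)"
    using r c by (simp add: index_kron_mat[OF one_carrier_mat one_carrier_mat]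
        div_less_of_less_mult mod_less_of_less_mult)
qed (auto simp: kron_mat_def)

lemma char_poly_conjugate:
  fixes M :: "'a :: field mat"
  assumes M: "M \<in> carrier_mat n n" and S: "S \<in> carrier_mat n n" and S': "S' \<in> carrier_mat n n"
    and inv: "S' * S = 1\<^sub>m n"
  shows "char_poly (S' * M * S) = char_poly M"
proof -
  have dim: "dim_row (S' * M * S) = n"
    using S' by simp
  have "similar_mat_wit (S' * M * S) M S' S"
    unfolding similar_mat_wit_def Let_def dim
    using M S S' inv mat_mult_left_right_inverse[OF S' S inv] by simp
  then have "similar_mat (S' * M * S) M"
    unfolding similar_mat_def by blast
  then show ?thesis
    by (rule char_poly_similar)
qed

lemma char_poly_kron_mat_sum_conjugate:
  fixes X :: "'a :: field mat"
  assumes X: "X \<in> carrier_mat n n" and U: "U \<in> carrier_mat n n"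
    and Y: "Y \<in> carrier_mat m m" and V: "V \<in> carrier_mat m m"
    and S: "S \<in> carrier_mat n n" "S' \<in> carrier_mat n n" "S' * S = 1\<^sub>m n"
    and T: "T \<in> carrier_mat m m" "T' \<in> carrier_mat m m" "T' * T = 1\<^sub>m m"
  shows "char_poly (kron_mat X Y + kron_mat U V)
    = char_poly (kron_mat (S' * X * S) (T' * Y * T) + kron_mat (S' * U * S) (T' * V * T))"
proof -
  have conj: "kron_mat S' T' * kron_mat Z W * kron_mat S T = kron_mat (S' * Z * S) (T' * W * T)"
    if Z: "Z \<in> carrier_mat n n" and W: "W \<in> carrier_mat m m" for Z W
  proof -
    have "kron_mat S' T' * kron_mat Z W = kron_mat (S' * Z) (T' * W)"
      by (rule kron_mat_mult[OF S(2) Z T(2) W])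
    moreover have "kron_mat (S' * Z) (T' * W) * kron_mat S T = kron_mat (S' * Z * S) (T' * W * T)"
      by (rule kron_mat_mult[OF mult_carrier_mat[OF S(2) Z] S(1) mult_carrier_mat[OF T(2) W] T(1)])
    ultimately show ?thesis
      by (simp only:)
  qed
  have KX: "kron_mat X Y \<in> carrier_mat (n * m) (n * m)" and KU: "kron_mat U V \<in> carrier_mat (n * m) (n * m)"
    using X Y U V by (simp_all add: kron_mat_carrier)
  have KS: "kron_mat S T \<in> carrier_mat (n * m) (n * m)" and KS': "kron_mat S' T' \<in> carrier_mat (n * m) (n * m)"
    using S T by (simp_all add: kron_mat_carrier)
  have inv: "kron_mat S' T' * kron_mat S T = 1\<^sub>m (n * m)"
    unfolding kron_mat_mult[OF S(2) S(1) T(2) T(1)] S(3) T(3) kron_mat_one ..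
  have "char_poly (kron_mat X Y + kron_mat U V)
      = char_poly (kron_mat S' T' * (kron_mat X Y + kron_mat U V) * kron_mat S T)"
    by (rule char_poly_conjugate[OF add_carrier_mat[OF KU] KS KS' inv, symmetric])
  also have "kron_mat S' T' * (kron_mat X Y + kron_mat U V) * kron_mat S T
      = (kron_mat S' T' * kron_mat X Y + kron_mat S' T' * kron_mat U V) * kron_mat S T"
    using mult_add_distrib_mat[OF KS' KX KU] by simp
  also have "\<dots> = kron_mat S' T' * kron_mat X Y * kron_mat S T + kron_mat S' T' * kron_mat U V * kron_mat S T"
    by (rule add_mult_distrib_mat[OF mult_carrier_mat[OF KS' KX] mult_carrier_mat[OF KS' KU] KS])
  also have "\<dots> = kron_mat (S' * X * S) (T' * Y * T) + kron_mat (S' * U * S) (T' * V * T)"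
    unfolding conj[OF X Y] conj[OF U V] ..
  finally show ?thesis .
qed

section \<open>Splitting off the eigenvector \<open>\<one>\<close>\<close>

definition diag_block :: "'a :: zero \<Rightarrow> 'a mat \<Rightarrow> 'a mat" where
  "diag_block x X = four_block_mat (mat 1 1 (\<lambda>_. x)) (0\<^sub>m 1 (dim_col X)) (0\<^sub>m (dim_row X) 1) X"

lemma dim_diag_block [simp]:
  "dim_row (diag_block x X) = Suc (dim_row X)" "dim_col (diag_block x X) = Suc (dim_col X)"
  unfolding diag_block_def by simp_all

lemma diag_block_carrier: "X \<in> carrier_mat n n \<Longrightarrow> diag_block x X \<in> carrier_mat (Suc n) (Suc n)"
  unfolding diag_block_def by auto

lemma index_diag_block:
  assumes "X \<in> carrier_mat n n" "i < Suc n" "j < Suc n"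
  shows "diag_block x X $$ (i, j)
    = (if i = 0 \<and> j = 0 then x else if i = 0 \<or> j = 0 then 0 else X $$ (i - 1, j - 1))"
  using assms unfolding diag_block_def by auto

lemma char_poly_diag_block:
  assumes "X \<in> carrier_mat n n"
  shows "char_poly (diag_block x X) = [:-x, 1:] * char_poly X"
proof -
  have "char_poly (diag_block x X) = char_poly (mat 1 1 (\<lambda>_. x)) * char_poly X"
    unfolding diag_block_def using assms by (intro char_poly_four_block_zeros_col) auto
  also have "char_poly (mat 1 1 (\<lambda>_. x)) = [:-x, 1:]"
    by (subst char_poly_upper_triangular[of _ 1]) (auto simp: diag_mat_def)
  finally show ?thesis .
qed

text \<open>The columns of \<open>ones_basis_mat n\<close> are \<open>\<one>\<^sub>n\<close> and the vectors \<open>e\<^sub>j - e\<^sub>0\<close> (\<open>0 < j < n\<close>).\<close>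

definition ones_basis_mat :: "nat \<Rightarrow> real mat" where
  "ones_basis_mat n = mat n n (\<lambda>(i, j). if j = 0 then 1 else if i = j then 1 else if i = 0 then -1 else 0)"

definition ones_basis_inv :: "nat \<Rightarrow> real mat" where
  "ones_basis_inv n = mat n n (\<lambda>(j, i). if j = 0 then 1 / real n else (if i = j then 1 else 0) - 1 / real n)"

lemma ones_basis_mat_carrier [simp]: "ones_basis_mat n \<in> carrier_mat n n"
  unfolding ones_basis_mat_def by auto

lemma ones_basis_inv_carrier [simp]: "ones_basis_inv n \<in> carrier_mat n n"
  unfolding ones_basis_inv_def by auto

lemma sum_col_ones_basis_mat:
  assumes "j < n"
  shows "(\<Sum>i<n. ones_basis_mat n $$ (i, j)) = (if j = 0 then real n else 0)"
proof (cases "j = 0")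
  case False
  have "(\<Sum>i<n. ones_basis_mat n $$ (i, j)) = (\<Sum>i<n. (if i = j then 1 else 0) - (if i = 0 then 1 else 0))"
    using assms False by (intro sum.cong) (auto simp: ones_basis_mat_def)
  then show ?thesis
    using assms False by (simp add: sum_subtractf)
qed (use assms in \<open>simp add: ones_basis_mat_def\<close>)

lemma sum_row_ones_basis_inv:
  assumes "i < n"
  shows "(\<Sum>j<n. ones_basis_inv n $$ (i, j)) = (if i = 0 then 1 else 0)"
proof (cases "i = 0")
  case False
  have "(\<Sum>j<n. ones_basis_inv n $$ (i, j)) = (\<Sum>j<n. (if j = i then 1 else 0) - 1 / real n)"
    using assms False by (intro sum.cong) (auto simp: ones_basis_inv_def)
  then show ?thesis
    using assms False by (simp add: sum_subtractf)
qed (use assms in \<open>simp add: ones_basis_inv_def\<close>)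

lemma ones_basis_inv_mult: "ones_basis_inv n * ones_basis_mat n = 1\<^sub>m n"
proof (rule eq_matI)
  fix i k assume "i < dim_row (1\<^sub>m n)" "k < dim_col (1\<^sub>m n)"
  then have i: "i < n" and k: "k < n"
    by auto
  let ?S = "ones_basis_mat n"
  have "(ones_basis_inv n * ?S) $$ (i, k) = (\<Sum>j<n. ones_basis_inv n $$ (i, j) * ?S $$ (j, k))"
    by (rule index_mult_mat_sum) (use i k in auto)
  also have "\<dots> = (if i = 0 then 0 else ?S $$ (i, k)) + (if i = 0 then 1 else -1) / real n * (\<Sum>j<n. ?S $$ (j, k))"
  proof (cases "i = 0")
    case True
    then show ?thesis
      using i by (simp add: ones_basis_inv_def sum_distrib_left)
  next
    case False
    have "(\<Sum>j<n. ones_basis_inv n $$ (i, j) * ?S $$ (j, k))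
        = (\<Sum>j<n. (if j = i then ?S $$ (j, k) else 0) - ?S $$ (j, k) / real n)"
      using i False by (intro sum.cong) (auto simp: ones_basis_inv_def field_simps)
    then show ?thesis
      using i False by (simp add: sum_subtractf sum_divide_distrib)
  qed
  also have "\<dots> = 1\<^sub>m n $$ (i, k)"
    unfolding sum_col_ones_basis_mat[OF k] using i k by (auto simp: ones_basis_mat_def)
  finally show "(ones_basis_inv n * ?S) $$ (i, k) = 1\<^sub>m n $$ (i, k)" .
qed (auto simp: ones_basis_inv_def ones_basis_mat_def)

lemma index_ones_basis_conj_first_col:
  assumes X: "X \<in> carrier_mat n n" and rows: "\<And>i. i < n \<Longrightarrow> (\<Sum>j<n. X $$ (i, j)) = \<rho>"
    and i: "i < n"
  shows "(ones_basis_inv n * X * ones_basis_mat n) $$ (i, 0) = (if i = 0 then \<rho> else 0)"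
proof -
  have n: "0 < n"
    using i by simp
  have XS: "(X * ones_basis_mat n) $$ (k, 0) = \<rho>" if k: "k < n" for k
  proof -
    have "(X * ones_basis_mat n) $$ (k, 0) = (\<Sum>j<n. X $$ (k, j) * ones_basis_mat n $$ (j, 0))"
      by (rule index_mult_mat_sum[OF X _ k n]) simp
    also have "\<dots> = (\<Sum>j<n. X $$ (k, j))"
      by (simp add: ones_basis_mat_def)
    finally show ?thesis
      using rows[OF k] by simp
  qed
  have "(ones_basis_inv n * X * ones_basis_mat n) $$ (i, 0)
      = (ones_basis_inv n * (X * ones_basis_mat n)) $$ (i, 0)"
    by (subst assoc_mult_mat[OF ones_basis_inv_carrier X ones_basis_mat_carrier]) (rule refl)
  also have "\<dots> = (\<Sum>k<n. ones_basis_inv n $$ (i, k) * (X * ones_basis_mat n) $$ (k, 0))"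
    by (rule index_mult_mat_sum[OF ones_basis_inv_carrier mult_carrier_mat[OF X ones_basis_mat_carrier] i n])
  also have "\<dots> = (\<Sum>k<n. ones_basis_inv n $$ (i, k)) * \<rho>"
    by (simp add: XS sum_distrib_right)
  finally show ?thesis
    using i by (simp add: sum_row_ones_basis_inv)
qed

lemma index_ones_basis_conj_first_row:
  assumes X: "X \<in> carrier_mat n n" and cols: "\<And>j. j < n \<Longrightarrow> (\<Sum>i<n. X $$ (i, j)) = \<rho>"
    and j: "j < n"
  shows "(ones_basis_inv n * X * ones_basis_mat n) $$ (0, j) = (if j = 0 then \<rho> else 0)"
proof -
  have n: "0 < n"
    using j by simp
  have SX: "(ones_basis_inv n * X) $$ (0, l) = \<rho> / real n" if l: "l < n" for l
  proof -
    have "(ones_basis_inv n * X) $$ (0, l) = (\<Sum>i<n. ones_basis_inv n $$ (0, i) * X $$ (i, l))"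
      by (rule index_mult_mat_sum[OF _ X n l]) simp
    also have "\<dots> = (\<Sum>i<n. X $$ (i, l)) / real n"
      by (simp add: ones_basis_inv_def sum_divide_distrib)
    finally show ?thesis
      using cols[OF l] by simp
  qed
  have "(ones_basis_inv n * X * ones_basis_mat n) $$ (0, j)
      = (\<Sum>l<n. (ones_basis_inv n * X) $$ (0, l) * ones_basis_mat n $$ (l, j))"
    by (rule index_mult_mat_sum[OF mult_carrier_mat[OF ones_basis_inv_carrier X] ones_basis_mat_carrier n j])
  also have "\<dots> = \<rho> / real n * (\<Sum>l<n. ones_basis_mat n $$ (l, j))"
    by (simp add: SX sum_distrib_left)
  finally show ?thesis
    using j n by (simp add: sum_col_ones_basis_mat)
qed

definition deflate :: "real mat \<Rightarrow> real mat" where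
  "deflate X = (let n = dim_row X; Y = ones_basis_inv n * X * ones_basis_mat n
    in mat (n - 1) (n - 1) (\<lambda>(i, j). Y $$ (Suc i, Suc j)))"

lemma deflate_carrier: "X \<in> carrier_mat n n \<Longrightarrow> deflate X \<in> carrier_mat (n - 1) (n - 1)"
  unfolding deflate_def by auto

lemma ones_basis_conj_eq_diag_block:
  assumes X: "X \<in> carrier_mat n n" and n: "0 < n"
    and rows: "\<And>i. i < n \<Longrightarrow> (\<Sum>j<n. X $$ (i, j)) = \<rho>"
    and cols: "\<And>j. j < n \<Longrightarrow> (\<Sum>i<n. X $$ (i, j)) = \<rho>"
  shows "ones_basis_inv n * X * ones_basis_mat n = diag_block \<rho> (deflate X)"
proof (rule eq_matI)
  have D: "diag_block \<rho> (deflate X) \<in> carrier_mat n n"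
    using diag_block_carrier[OF deflate_carrier[OF X]] n by simp
  then show "dim_row (ones_basis_inv n * X * ones_basis_mat n) = dim_row (diag_block \<rho> (deflate X))"
    "dim_col (ones_basis_inv n * X * ones_basis_mat n) = dim_col (diag_block \<rho> (deflate X))"
    using X by (auto simp: ones_basis_inv_def ones_basis_mat_def)
  fix i j assume "i < dim_row (diag_block \<rho> (deflate X))" "j < dim_col (diag_block \<rho> (deflate X))"
  then have i: "i < n" and j: "j < n"
    using D by auto
  show "(ones_basis_inv n * X * ones_basis_mat n) $$ (i, j) = diag_block \<rho> (deflate X) $$ (i, j)"
    using i j n index_ones_basis_conj_first_col[OF X rows i] index_ones_basis_conj_first_row[OF X cols j]
      index_diag_block[OF deflate_carrier[OF X], of i j \<rho>] X
    by (cases i; cases j) (auto simp: deflate_def)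
qed

lemma char_poly_deflate:
  assumes X: "X \<in> carrier_mat n n" and n: "0 < n"
    and rows: "\<And>i. i < n \<Longrightarrow> (\<Sum>j<n. X $$ (i, j)) = \<rho>"
    and cols: "\<And>j. j < n \<Longrightarrow> (\<Sum>i<n. X $$ (i, j)) = \<rho>"
  shows "char_poly X = [:-\<rho>, 1:] * char_poly (deflate X)"
proof -
  have "char_poly X = char_poly (ones_basis_inv n * X * ones_basis_mat n)"
    using X by (simp add: char_poly_conjugate ones_basis_inv_mult)
  also have "\<dots> = char_poly (diag_block \<rho> (deflate X))"
    using ones_basis_conj_eq_diag_block[OF X n rows cols] by (rule arg_cong)
  also have "\<dots> = [:-\<rho>, 1:] * char_poly (deflate X)"
    by (rule char_poly_diag_block[OF deflate_carrier[OF X]])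
  finally show ?thesis .
qed

definition all_ones_mat :: "nat \<Rightarrow> real mat" where
  "all_ones_mat n = mat n n (\<lambda>_. 1)"

lemma all_ones_mat_carrier [simp]: "all_ones_mat n \<in> carrier_mat n n"
  unfolding all_ones_mat_def by simp

lemma ones_basis_conj_all_ones_mat:
  assumes n: "0 < n"
  shows "ones_basis_inv n * all_ones_mat n * ones_basis_mat n = diag_block (real n) (0\<^sub>m (n - 1) (n - 1))"
proof -
  let ?J = "all_ones_mat n"
  have sums: "(\<Sum>j<n. ?J $$ (i, j)) = real n" "(\<Sum>j<n. ?J $$ (j, i)) = real n" if "i < n" for i
    using that by (simp_all add: all_ones_mat_def)
  have "deflate ?J = 0\<^sub>m (n - 1) (n - 1)"
  proof (rule eq_matI)
    fix i j assume "i < dim_row (0\<^sub>m (n - 1) (n - 1) :: real mat)" "j < dim_col (0\<^sub>m (n - 1) (n - 1) :: real mat)"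
    then have i: "Suc i < n" and j: "Suc j < n"
      by auto
    have "(ones_basis_inv n * ?J) $$ (Suc i, l) = (\<Sum>k<n. ones_basis_inv n $$ (Suc i, k) * ?J $$ (k, l))"
      if "l < n" for l
      by (rule index_mult_mat_sum[OF _ _ i that]) simp_all
    then have "(ones_basis_inv n * ?J) $$ (Suc i, l) = (\<Sum>k<n. ones_basis_inv n $$ (Suc i, k))" if "l < n" for l
      using that by (simp add: all_ones_mat_def)
    then have "(ones_basis_inv n * ?J) $$ (Suc i, l) = 0" if "l < n" for l
      using that i by (simp add: sum_row_ones_basis_inv)
    moreover have "(ones_basis_inv n * ?J * ones_basis_mat n) $$ (Suc i, Suc j)
        = (\<Sum>l<n. (ones_basis_inv n * ?J) $$ (Suc i, l) * ones_basis_mat n $$ (l, Suc j))"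
      by (rule index_mult_mat_sum[OF mult_carrier_mat[OF ones_basis_inv_carrier all_ones_mat_carrier]
            ones_basis_mat_carrier i j])
    ultimately show "deflate ?J $$ (i, j) = 0\<^sub>m (n - 1) (n - 1) $$ (i, j)"
      using i j by (simp add: deflate_def carrier_matD[OF all_ones_mat_carrier])
  qed (use deflate_carrier[OF all_ones_mat_carrier, of n] in auto)
  then show ?thesis
    using ones_basis_conj_eq_diag_block[OF all_ones_mat_carrier n sums] by simp
qed

section \<open>Regrouping a Kronecker sum into blocks\<close>

lemma char_poly_four_block_diag:
  fixes X :: "'a :: idom mat"
  assumes X: "X \<in> carrier_mat n n" and Y: "Y \<in> carrier_mat m m"
  shows "char_poly (four_block_mat X (0\<^sub>m n m) (0\<^sub>m m n) Y) = char_poly X * char_poly Y"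
proof -
  let ?cm = "\<lambda>A. [:0, 1:] \<cdot>\<^sub>m 1\<^sub>m (dim_row A) + map_mat (\<lambda>a. [:- a:]) A"
  have "?cm (four_block_mat X (0\<^sub>m n m) (0\<^sub>m m n) Y) = four_block_mat (?cm X) (0\<^sub>m n m) (0\<^sub>m m n) (?cm Y)"
    by (rule eq_matI) (use X Y in \<open>auto simp: one_poly_def\<close>)
  moreover have "det (four_block_mat (?cm X) (0\<^sub>m n m) (0\<^sub>m m n) (?cm Y)) = det (?cm X) * det (?cm Y)"
    by (rule det_four_block_mat_lower_left_zero[OF _ _ refl]) (use X Y in auto)
  ultimately show ?thesis
    unfolding char_poly_defs by simp
qed

lemma char_poly_zero_mat: "char_poly (0\<^sub>m k k :: 'a :: comm_ring_1 mat) = [:0, 1:] ^ k"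
proof -
  have "diag_mat (0\<^sub>m k k :: 'a mat) = replicate k 0"
    by (rule nth_equalityI) (auto simp: diag_mat_def)
  then show ?thesis
    by (subst char_poly_upper_triangular[of _ k]) (auto simp: prod_list_replicate)
qed

lemma char_poly_reindex:
  fixes M :: "'a :: field mat"
  assumes M: "M \<in> carrier_mat N N"
    and into: "\<And>r. r < N \<Longrightarrow> \<sigma> r < N" and inj: "inj_on \<sigma> {..<N}"
  shows "char_poly (mat N N (\<lambda>(r, c). M $$ (\<sigma> r, \<sigma> c))) = char_poly M"
proof -
  define P where "P = mat N N (\<lambda>(r, c). if r = \<sigma> c then 1 else (0 :: 'a))"
  define Q where "Q = mat N N (\<lambda>(r, c). if \<sigma> r = c then 1 else (0 :: 'a))"
  have P: "P \<in> carrier_mat N N" and Q: "Q \<in> carrier_mat N N"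
    unfolding P_def Q_def by auto
  have MP: "(M * P) $$ (k, c) = M $$ (k, \<sigma> c)" if "k < N" "c < N" for k c
  proof -
    have "(M * P) $$ (k, c) = (\<Sum>l<N. if l = \<sigma> c then M $$ (k, l) else 0)"
      unfolding index_mult_mat_sum[OF M P that] using that by (intro sum.cong) (auto simp: P_def)
    then show ?thesis
      using into[of c] that by simp
  qed
  have "mat N N (\<lambda>(r, c). M $$ (\<sigma> r, \<sigma> c)) = Q * M * P"
  proof (rule eq_matI)
    fix r c assume "r < dim_row (Q * M * P)" "c < dim_col (Q * M * P)"
    then have rc: "r < N" "c < N"
      using P Q by auto
    have "(Q * M * P) $$ (r, c) = (Q * (M * P)) $$ (r, c)"
      by (subst assoc_mult_mat[OF Q M P]) (rule refl)
    also have "\<dots> = (\<Sum>k<N. if k = \<sigma> r then M $$ (k, \<sigma> c) else 0)"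
      unfolding index_mult_mat_sum[OF Q mult_carrier_mat[OF M P] rc] using rc MP
      by (intro sum.cong) (auto simp: Q_def)
    finally show "mat N N (\<lambda>(r, c). M $$ (\<sigma> r, \<sigma> c)) $$ (r, c) = (Q * M * P) $$ (r, c)"
      using rc into[of r] by simp
  qed (use P Q in auto)
  moreover have "Q * P = 1\<^sub>m N"
  proof (rule eq_matI)
    fix r c assume "r < dim_row (1\<^sub>m N)" "c < dim_col (1\<^sub>m N)"
    then have rc: "r < N" "c < N"
      by auto
    have "(Q * P) $$ (r, c) = (\<Sum>k<N. if k = \<sigma> r then (if \<sigma> r = \<sigma> c then 1 else 0) else 0)"
      unfolding index_mult_mat_sum[OF Q P rc] using rc by (intro sum.cong) (auto simp: P_def Q_def)
    then show "(Q * P) $$ (r, c) = 1\<^sub>m N $$ (r, c)"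
      using rc into[of r] inj_onD[OF inj, of r c] by auto
  qed (use P Q in auto)
  ultimately show ?thesis
    using char_poly_conjugate[OF M P Q] by simp
qed

text \<open>Enumeration of the index pairs \<open>(i, p) \<in> {0..n} \<times> {0..m}\<close> listing first the pairs \<open>(i, 0)\<close>,
  then the pairs \<open>(0, p)\<close> with \<open>p > 0\<close>, and finally all pairs with \<open>i, p > 0\<close>. In this order
  the Kronecker sums below become block diagonal.\<close>

definition regroup :: "nat \<Rightarrow> nat \<Rightarrow> nat \<Rightarrow> nat \<times> nat" where
  "regroup n m t = (if t \<le> n then (t, 0) else if t \<le> n + m then (0, t - n)
    else (Suc ((t - Suc (n + m)) div m), Suc ((t - Suc (n + m)) mod m)))"

lemma regroup_bound:
  assumes "t < Suc n * Suc m"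
  shows "fst (regroup n m t) < Suc n \<and> snd (regroup n m t) < Suc m"
proof (cases "t \<le> n + m")
  case False
  then have u: "t - Suc (n + m) < n * m"
    using assms by simp
  then have "0 < m"
    by (cases m) auto
  with u show ?thesis
    using False by (auto simp: regroup_def less_mult_imp_div_less)
qed (auto simp: regroup_def)

lemma regroup_inj: "inj (regroup n m)"
proof (rule injI)
  fix t t' assume eq: "regroup n m t = regroup n m t'"
  have region1: "snd (regroup n m s) = 0 \<longleftrightarrow> s \<le> n" for s
    by (simp add: regroup_def)
  have region3: "fst (regroup n m s) \<noteq> 0 \<and> snd (regroup n m s) \<noteq> 0 \<longleftrightarrow> \<not> s \<le> n + m" for s
    by (simp add: regroup_def)
  consider "t \<le> n" | "\<not> t \<le> n" "t \<le> n + m" | "\<not> t \<le> n + m"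
    by linarith
  then show "t = t'"
  proof cases
    case 1
    then show ?thesis
      using eq region1[of t] region1[of t'] by (simp add: regroup_def)
  next
    case 2
    then have "\<not> t' \<le> n" "t' \<le> n + m"
      using eq region1[of t] region1[of t'] region3[of t] region3[of t'] by metis+
    then show ?thesis
      using 2 eq by (simp add: regroup_def)
  next
    case 3
    then have "\<not> t' \<le> n + m"
      using eq region3[of t] region3[of t'] by metis
    then have "(t - Suc (n + m)) div m = (t' - Suc (n + m)) div m"
      "(t - Suc (n + m)) mod m = (t' - Suc (n + m)) mod m"
      using 3 eq by (simp_all add: regroup_def)
    then have "t - Suc (n + m) = t' - Suc (n + m)"
      by (metis div_mult_mod_eq)
    then show ?thesis
      using 3 \<open>\<not> t' \<le> n + m\<close> by simp
  qed
qed

definition regroup_index :: "nat \<Rightarrow> nat \<Rightarrow> nat \<Rightarrow> nat" where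
  "regroup_index n m t = fst (regroup n m t) * Suc m + snd (regroup n m t)"

lemma regroup_index_less: "t < Suc n * Suc m \<Longrightarrow> regroup_index n m t < Suc n * Suc m"
  unfolding regroup_index_def using regroup_bound by (blast intro: mult_add_less_mult_nat)

lemma inj_on_regroup_index: "inj_on (regroup_index n m) {..<Suc n * Suc m}"
proof (rule inj_onI)
  fix t t' assume "t \<in> {..<Suc n * Suc m}" "t' \<in> {..<Suc n * Suc m}" "regroup_index n m t = regroup_index n m t'"
  moreover have "regroup n m s = (regroup_index n m s div Suc m, regroup_index n m s mod Suc m)"
    if "s < Suc n * Suc m" for s
    unfolding regroup_index_def using regroup_bound[OF that] by (simp add: prod_eq_iff del: mult_Suc_right)
  ultimately have "regroup n m t = regroup n m t'"
    by simp
  then show "t = t'"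
    by (rule injD[OF regroup_inj])
qed

lemma index_kron_sum_diag_blocks:
  fixes X' :: "'a :: comm_ring_1 mat"
  assumes X': "X' \<in> carrier_mat n n" and Y': "Y' \<in> carrier_mat m m"
    and i: "i < Suc n" and j: "j < Suc n" and p: "p < Suc m" and q: "q < Suc m"
  shows "(kron_mat (diag_block x X') (diag_block v (0\<^sub>m m m)) + kron_mat (diag_block u (0\<^sub>m n n)) (diag_block y Y'))
      $$ (i * Suc m + p, j * Suc m + q)
    = (if p = 0 \<and> q = 0 then v * diag_block x X' $$ (i, j) else 0)
      + (if i = 0 \<and> j = 0 then u * diag_block y Y' $$ (p, q) else 0)"
proof -
  have carriers: "diag_block x X' \<in> carrier_mat (Suc n) (Suc n)" "diag_block u (0\<^sub>m n n) \<in> carrier_mat (Suc n) (Suc n)"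
    "diag_block y Y' \<in> carrier_mat (Suc m) (Suc m)" "diag_block v (0\<^sub>m m m) \<in> carrier_mat (Suc m) (Suc m)"
    using X' Y' by (simp_all add: diag_block_carrier)
  have ip: "i * Suc m + p < Suc n * Suc m" and jq: "j * Suc m + q < Suc n * Suc m"
    using mult_add_less_mult_nat i j p q by blast+
  have "(kron_mat (diag_block x X') (diag_block v (0\<^sub>m m m)) + kron_mat (diag_block u (0\<^sub>m n n)) (diag_block y Y'))
      $$ (i * Suc m + p, j * Suc m + q)
    = kron_mat (diag_block x X') (diag_block v (0\<^sub>m m m)) $$ (i * Suc m + p, j * Suc m + q)
      + kron_mat (diag_block u (0\<^sub>m n n)) (diag_block y Y') $$ (i * Suc m + p, j * Suc m + q)"
    using kron_mat_carrier[OF carriers(2,3)] ip jq by (intro index_add_mat(1)) auto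
  also have "\<dots> = diag_block x X' $$ (i, j) * diag_block v (0\<^sub>m m m) $$ (p, q)
      + diag_block u (0\<^sub>m n n) $$ (i, j) * diag_block y Y' $$ (p, q)"
    unfolding index_kron_mat_pair[OF carriers(1,4) i p j q] index_kron_mat_pair[OF carriers(2,3) i p j q] ..
  finally show ?thesis
    using i j p q by (simp add: index_diag_block[of "0\<^sub>m n n" n] index_diag_block[of "0\<^sub>m m m" m])
qed

lemma index_kron_sum_diag_blocks_regroup:
  fixes X' :: "'a :: comm_ring_1 mat"
  assumes X': "X' \<in> carrier_mat n n" and Y': "Y' \<in> carrier_mat m m"
    and r: "r < Suc n * Suc m" and c: "c < Suc n * Suc m"
  shows "(kron_mat (diag_block x X') (diag_block v (0\<^sub>m m m)) + kron_mat (diag_block u (0\<^sub>m n n)) (diag_block y Y'))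
      $$ (regroup_index n m r, regroup_index n m c)
    = (if r \<le> n \<and> c \<le> n then diag_block (x * v + u * y) (v \<cdot>\<^sub>m X') $$ (r, c)
       else if n < r \<and> r \<le> n + m \<and> n < c \<and> c \<le> n + m then u * Y' $$ (r - Suc n, c - Suc n)
       else 0)"
proof -
  note bound = regroup_bound[OF r] regroup_bound[OF c]
  have "(kron_mat (diag_block x X') (diag_block v (0\<^sub>m m m)) + kron_mat (diag_block u (0\<^sub>m n n)) (diag_block y Y'))
      $$ (regroup_index n m r, regroup_index n m c)
    = (if snd (regroup n m r) = 0 \<and> snd (regroup n m c) = 0
        then v * diag_block x X' $$ (fst (regroup n m r), fst (regroup n m c)) else 0)
      + (if fst (regroup n m r) = 0 \<and> fst (regroup n m c) = 0
        then u * diag_block y Y' $$ (snd (regroup n m r), snd (regroup n m c)) else 0)"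
    unfolding regroup_index_def using bound by (intro index_kron_sum_diag_blocks[OF X' Y']) simp_all
  also have "\<dots> = (if r \<le> n \<and> c \<le> n then diag_block (x * v + u * y) (v \<cdot>\<^sub>m X') $$ (r, c)
       else if n < r \<and> r \<le> n + m \<and> n < c \<and> c \<le> n + m then u * Y' $$ (r - Suc n, c - Suc n)
       else 0)"
    using r c
    by (cases "r \<le> n"; cases "c \<le> n"; cases "r \<le> n + m"; cases "c \<le> n + m")
      (auto simp: regroup_def index_diag_block[OF X'] index_diag_block[OF Y']
        index_diag_block[of "v \<cdot>\<^sub>m X'" n] X' carrier_matD[OF X'] mult.commute)
  finally show ?thesis .
qed

lemma char_poly_kron_sum_diag_blocks:
  fixes X' :: "'a :: field mat"
  assumes X': "X' \<in> carrier_mat n n" and Y': "Y' \<in> carrier_mat m m"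
  shows "char_poly (kron_mat (diag_block x X') (diag_block v (0\<^sub>m m m)) + kron_mat (diag_block u (0\<^sub>m n n)) (diag_block y Y'))
    = [:-(x * v + u * y), 1:] * char_poly (v \<cdot>\<^sub>m X') * char_poly (u \<cdot>\<^sub>m Y') * [:0, 1:] ^ (n * m)"
proof -
  define N where "N = Suc n * Suc m"
  define K where "K = kron_mat (diag_block x X') (diag_block v (0\<^sub>m m m)) + kron_mat (diag_block u (0\<^sub>m n n)) (diag_block y Y')"
  define B where "B = four_block_mat (diag_block (x * v + u * y) (v \<cdot>\<^sub>m X')) (0\<^sub>m (Suc n) m) (0\<^sub>m m (Suc n)) (u \<cdot>\<^sub>m Y')"
  define T where "T = four_block_mat B (0\<^sub>m (Suc n + m) (n * m)) (0\<^sub>m (n * m) (Suc n + m)) (0\<^sub>m (n * m) (n * m))"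
  have K: "K \<in> carrier_mat N N"
    unfolding K_def N_def by (intro add_carrier_mat kron_mat_carrier diag_block_carrier) (use Y' in auto)
  have B: "B \<in> carrier_mat (Suc n + m) (Suc n + m)"
    unfolding B_def by (rule four_block_carrier_mat) (use X' Y' in \<open>simp_all add: diag_block_carrier\<close>)
  have N: "N = (Suc n + m) + n * m"
    unfolding N_def by simp
  have "char_poly K = char_poly (mat N N (\<lambda>(r, c). K $$ (regroup_index n m r, regroup_index n m c)))"
    by (rule char_poly_reindex[OF K, symmetric]) (unfold N_def, simp_all only: regroup_index_less inj_on_regroup_index)
  also have "mat N N (\<lambda>(r, c). K $$ (regroup_index n m r, regroup_index n m c)) = T"
  proof (rule eq_matI)
    fix r c assume "r < dim_row T" "c < dim_col T"
    then have r: "r < N" and c: "c < N"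
      unfolding T_def N using B by auto
    then show "mat N N (\<lambda>(r, c). K $$ (regroup_index n m r, regroup_index n m c)) $$ (r, c) = T $$ (r, c)"
      using B X' Y' index_kron_sum_diag_blocks_regroup[OF X' Y', of r c x v u y] unfolding K_def T_def B_def N
      by (auto simp: N_def)
  qed (use B in \<open>auto simp: T_def N\<close>)
  also have "char_poly T = char_poly B * [:0, 1:] ^ (n * m)"
    unfolding T_def char_poly_four_block_diag[OF B zero_carrier_mat] char_poly_zero_mat ..
  also have "char_poly B = [:-(x * v + u * y), 1:] * char_poly (v \<cdot>\<^sub>m X') * char_poly (u \<cdot>\<^sub>m Y')"
    unfolding B_def using X' Y'
    by (simp add: char_poly_four_block_diag[of _ "Suc n"] diag_block_carrier
        char_poly_diag_block[of "v \<cdot>\<^sub>m X'" n])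
  finally show ?thesis
    unfolding K_def .
qed

section \<open>Inertia of the diamond product\<close>

lemma diamond_eq_kron_mat_sum:
  assumes A: "A \<in> carrier_mat n n" and B: "B \<in> carrier_mat m m"
  shows "diamond A B = kron_mat A (all_ones_mat m) + kron_mat (all_ones_mat n) B"
proof (rule eq_matI)
  have K: "kron_mat (all_ones_mat n) B \<in> carrier_mat (n * m) (n * m)"
    using B by (simp add: kron_mat_carrier)
  fix r c assume "r < dim_row (kron_mat A (all_ones_mat m) + kron_mat (all_ones_mat n) B)"
    "c < dim_col (kron_mat A (all_ones_mat m) + kron_mat (all_ones_mat n) B)"
  then have r: "r < n * m" and c: "c < n * m"
    using K by auto
  then show "diamond A B $$ (r, c) = (kron_mat A (all_ones_mat m) + kron_mat (all_ones_mat n) B) $$ (r, c)"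
    using A B K index_kron_mat[OF A all_ones_mat_carrier r c] index_kron_mat[OF all_ones_mat_carrier B r c]
    by (simp add: diamond_def all_ones_mat_def div_less_of_less_mult mod_less_of_less_mult)
qed (use A B in \<open>auto simp: diamond_def kron_mat_def all_ones_mat_def\<close>)

lemma char_poly_diamond:
  assumes A: "A \<in> carrier_mat n n" and n: "0 < n"
    and rowsA: "\<And>i. i < n \<Longrightarrow> (\<Sum>j<n. A $$ (i, j)) = \<rho>A"
    and colsA: "\<And>j. j < n \<Longrightarrow> (\<Sum>i<n. A $$ (i, j)) = \<rho>A"
    and B: "B \<in> carrier_mat m m" and m: "0 < m"
    and rowsB: "\<And>i. i < m \<Longrightarrow> (\<Sum>j<m. B $$ (i, j)) = \<rho>B"
    and colsB: "\<And>j. j < m \<Longrightarrow> (\<Sum>i<m. B $$ (i, j)) = \<rho>B"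
  shows "char_poly (diamond A B) = [:-(real m * \<rho>A + real n * \<rho>B), 1:]
    * char_poly (real m \<cdot>\<^sub>m deflate A) * char_poly (real n \<cdot>\<^sub>m deflate B) * [:0, 1:] ^ ((n - 1) * (m - 1))"
proof -
  let ?S = "\<lambda>k. ones_basis_mat k" and ?S' = "\<lambda>k. ones_basis_inv k"
  have "char_poly (diamond A B) = char_poly (kron_mat (?S' n * A * ?S n) (?S' m * all_ones_mat m * ?S m)
      + kron_mat (?S' n * all_ones_mat n * ?S n) (?S' m * B * ?S m))"
    unfolding diamond_eq_kron_mat_sum[OF A B]
    by (rule char_poly_kron_mat_sum_conjugate) (use A B in \<open>simp_all add: ones_basis_inv_mult\<close>)
  also have "\<dots> = char_poly (kron_mat (diag_block \<rho>A (deflate A)) (diag_block (real m) (0\<^sub>m (m - 1) (m - 1)))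
      + kron_mat (diag_block (real n) (0\<^sub>m (n - 1) (n - 1))) (diag_block \<rho>B (deflate B)))"
    using ones_basis_conj_eq_diag_block[OF A n rowsA colsA] ones_basis_conj_eq_diag_block[OF B m rowsB colsB]
      ones_basis_conj_all_ones_mat[OF n] ones_basis_conj_all_ones_mat[OF m] by simp
  also have "\<dots> = [:-(\<rho>A * real m + real n * \<rho>B), 1:]
      * char_poly (real m \<cdot>\<^sub>m deflate A) * char_poly (real n \<cdot>\<^sub>m deflate B) * [:0, 1:] ^ ((n - 1) * (m - 1))"
    by (rule char_poly_kron_sum_diag_blocks[OF deflate_carrier[OF A] deflate_carrier[OF B]])
  finally show ?thesis
    by (simp add: mult.commute)
qed

lemma root_count_char_poly_deflate:
  assumes A: "A \<in> carrier_mat n n" and n: "0 < n"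
    and rows: "\<And>i. i < n \<Longrightarrow> (\<Sum>j<n. A $$ (i, j)) = \<rho>"
    and cols: "\<And>j. j < n \<Longrightarrow> (\<Sum>i<n. A $$ (i, j)) = \<rho>"
  shows "root_count P (char_poly A) = (if P \<rho> then 1 else 0) + root_count P (char_poly (deflate A))"
  using char_poly_nonzero[OF deflate_carrier[OF A]]
  by (simp add: char_poly_deflate[OF A n rows cols] root_count_mult root_count_linear del: mult_pCons_left)

lemma root_count_char_poly_diamond:
  assumes A: "A \<in> carrier_mat n n" and n: "0 < n"
    and rowsA: "\<And>i. i < n \<Longrightarrow> (\<Sum>j<n. A $$ (i, j)) = \<rho>A"
    and colsA: "\<And>j. j < n \<Longrightarrow> (\<Sum>i<n. A $$ (i, j)) = \<rho>A"
    and B: "B \<in> carrier_mat m m" and m: "0 < m"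
    and rowsB: "\<And>i. i < m \<Longrightarrow> (\<Sum>j<m. B $$ (i, j)) = \<rho>B"
    and colsB: "\<And>j. j < m \<Longrightarrow> (\<Sum>i<m. B $$ (i, j)) = \<rho>B"
    and scale: "\<And>c x. 0 < c \<Longrightarrow> P (c * x) = P x"
  shows "root_count P (char_poly (diamond A B)) + (if P \<rho>A then 1 else 0) + (if P \<rho>B then 1 else 0)
    = root_count P (char_poly A) + root_count P (char_poly B)
      + (if P (real m * \<rho>A + real n * \<rho>B) then 1 else 0) + (if P 0 then (n - 1) * (m - 1) else 0)"
proof -
  have A': "real m \<cdot>\<^sub>m deflate A \<in> carrier_mat (n - 1) (n - 1)"
    and B': "real n \<cdot>\<^sub>m deflate B \<in> carrier_mat (m - 1) (m - 1)"
    using deflate_carrier[OF A] deflate_carrier[OF B] by simp_all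
  have "root_count P (char_poly (real m \<cdot>\<^sub>m deflate A)) = root_count P (char_poly (deflate A))"
    using deflate_carrier[OF A] m scale by (intro root_count_char_poly_smult) simp_all
  moreover have "root_count P (char_poly (real n \<cdot>\<^sub>m deflate B)) = root_count P (char_poly (deflate B))"
    using deflate_carrier[OF B] n scale by (intro root_count_char_poly_smult) simp_all
  ultimately have "root_count P (char_poly (diamond A B)) = (if P (real m * \<rho>A + real n * \<rho>B) then 1 else 0)
      + root_count P (char_poly (deflate A)) + root_count P (char_poly (deflate B))
      + (if P 0 then (n - 1) * (m - 1) else 0)"
    using char_poly_nonzero[OF A'] char_poly_nonzero[OF B'] root_count_linear[of P "real m * \<rho>A + real n * \<rho>B"]
    by (simp add: char_poly_diamond[OF A n rowsA colsA B m rowsB colsB] root_count_mult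
        root_count_monom_power del: mult_pCons_left)
  then show ?thesis
    using root_count_char_poly_deflate[OF A n rowsA colsA] root_count_char_poly_deflate[OF B m rowsB colsB]
    by simp
qed

lemma constant_line_sums:
  assumes A: "A \<in> carrier_mat n n" and sym: "transpose_mat A = A"
    and ev: "A *\<^sub>v ones_vec n = \<rho> \<cdot>\<^sub>v ones_vec n"
  shows "\<And>i. i < n \<Longrightarrow> (\<Sum>j<n. A $$ (i, j)) = \<rho>"
    and "\<And>j. j < n \<Longrightarrow> (\<Sum>i<n. A $$ (i, j)) = \<rho>"
proof -
  show rows: "(\<Sum>j<n. A $$ (i, j)) = \<rho>" if i: "i < n" for i
  proof -
    have "(A *\<^sub>v ones_vec n) $ i = (\<rho> \<cdot>\<^sub>v ones_vec n) $ i"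
      using ev by simp
    then show ?thesis
      using A i by (simp add: ones_vec_def scalar_prod_def lessThan_atLeast0)
  qed
  show "(\<Sum>i<n. A $$ (i, j)) = \<rho>" if j: "j < n" for j
  proof -
    have "A $$ (i, j) = A $$ (j, i)" if "i < n" for i
      using arg_cong[OF sym, of "\<lambda>M. M $$ (j, i)"] A that j by simp
    then show ?thesis
      using rows[OF j] by simp
  qed
qed

theorem theorem6:
  fixes A B :: "real mat" and n m :: nat and \<rho>A \<rho>B :: real
  assumes "n > 0" and "m > 0"
    and "A \<in> carrier_mat n n" and "transpose_mat A = A"
    and "A *\<^sub>v ones_vec n = \<rho>A \<cdot>\<^sub>v ones_vec n" and "\<rho>A > 0"
    and "B \<in> carrier_mat m m" and "transpose_mat B = B"
    and "B *\<^sub>v ones_vec m = \<rho>B \<cdot>\<^sub>v ones_vec m" and "\<rho>B > 0"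
  shows "n_neg (diamond A B) = n_neg A + n_neg B
    \<and> int (n_pos (diamond A B)) = int (n_pos A) + int (n_pos B) - 1
    \<and> int (n_zero (diamond A B)) = int n * int m - int n - int m + 1 + int (n_zero A) + int (n_zero B)"
proof -
  note A = assms(3) and B = assms(7)
  note linesA = constant_line_sums[OF A assms(4,5)] and linesB = constant_line_sums[OF B assms(8,9)]
  have "real m * \<rho>A + real n * \<rho>B > 0"
    using assms by (simp add: add_pos_pos)
  note count = root_count_char_poly_diamond[OF A assms(1) linesA B assms(2) linesB]
  have "n_neg (diamond A B) = n_neg A + n_neg B"
    using count[of "\<lambda>x. x < 0"] assms \<open>real m * \<rho>A + real n * \<rho>B > 0\<close>
    by (simp add: n_neg_eq_root_count mult_less_0_iff)
  moreover have "int (n_pos (diamond A B)) = int (n_pos A) + int (n_pos B) - 1"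
    using count[of "\<lambda>x. x > 0"] assms \<open>real m * \<rho>A + real n * \<rho>B > 0\<close>
    by (simp add: n_pos_eq_root_count zero_less_mult_iff)
  moreover have "int ((n - 1) * (m - 1)) = int n * int m - int n - int m + 1"
    using assms(1,2) by (cases n; cases m) (simp_all add: algebra_simps)
  then have "int (n_zero (diamond A B)) = int n * int m - int n - int m + 1 + int (n_zero A) + int (n_zero B)"
    using count[of "\<lambda>x. x = 0"] assms \<open>real m * \<rho>A + real n * \<rho>B > 0\<close>
    by (simp add: n_zero_eq_root_count)
  ultimately show ?thesis
    by blast
qed

end
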